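(* Let $\mathcal{U}$ be a measure space with measure $\mu$, $0<\mu(\mathcal{U})<\infty$, and equip $\mathcal{U}^n$ with the product measure. For $i\in[n]$ let $\mathcal{X}_i$ be a family of measurable subsets of $\mathcal{U}$ and let $Q_i\subseteq\mathcal{U}$ be a set of $m$ points with $\mathbf{D}(Q_i,\mathcal{X}_i)\le\varepsilon_i$; let $\sigma_i:[m]\to Q_i$ be injective. Let $P_R\subseteq[m]^n$ be a finite point collection (multiset) with discrepancy at most $\varepsilon_R$ against combinatorial rectangles, i.e. $\left|\frac{|P_R\cap(I_1\times\cdots\times I_n)|}{|P_R|}-\prod_{j=1}^n\frac{|I_j|}{m}\right|\le\varepsilon_R$ for all $I_1,\dots,I_n\subseteq[m]$. Define $\sigma(a_1,\dots,a_n)=(\sigma_1(a_1),\dots,\sigma_n(a_n))$ and the multiset $Q_{[n]}=\{\sigma(p):p\in P_R\}\subseteq\mathcal{U}^n$. Then \[ \mathbf{D}(Q_{[n]},\mathcal{X}_{[n]})\le\varepsilon_R+\sum_{i=1}^n\varepsilon_i, \] where $\mathcal{X}_{[n]}=\{X_1\times\cdots\times X_n: X_i\in\mathcal{X}_i\}$.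
   Context: $[r]=\{1,\dots,r\}$. Discrepancy: $\mathbf{D}(P,\mathcal{X})=\sup_{X\in\mathcal{X}}\left|\frac{|P\cap X|}{|P|}-\frac{\mu(X)}{\mu(\mathcal{U})}\right|$, with points counted with multiplicity. A combinatorial rectangle in $[m]^n$ is a set $I_1\times\cdots\times I_n$ with each $I_j\subseteq[m]$. *)

theory Defs
  imports "HOL-Analysis.Analysis" "HOL-Library.Multiset"
begin

definition count_in :: "'b multiset \<Rightarrow> 'b set \<Rightarrow> nat" where
  "count_in P X = size (filter_mset (\<lambda>x. x \<in> X) P)"

text \<open>Discrepancy D(P, Xs) w.r.t. measure N on universe space N:
  sup over X in Xs of | |P cap X|/|P| - mu(X)/mu(U) |, taken in ereal
  (so the sup over an empty family is -infinity).\<close>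
definition discrepancy :: "'b multiset \<Rightarrow> 'b set set \<Rightarrow> 'b measure \<Rightarrow> ereal" where
  "discrepancy P Xs N =
     (SUP X\<in>Xs. ereal \<bar>real (count_in P X) / real (size P)
                        - measure N X / measure N (space N)\<bar>)"

end

theory Submission
  imports Defs
begin

text \<open>Pulling a box \<open>X\<^sub>1 \<times> \<dots> \<times> X\<^sub>n\<close> back along \<open>\<sigma>\<close> gives the combinatorial rectangle
  \<open>I\<^sub>1 \<times> \<dots> \<times> I\<^sub>n\<close> with \<open>I\<^sub>j = \<sigma>\<^sub>j\<inverse>(X\<^sub>j)\<close>, so the frequency of \<open>Q\<^sub>[\<^sub>n\<^sub>]\<close> in the box equals that of
  \<open>P\<^sub>R\<close> in the rectangle, which is within \<open>\<epsilon>\<^sub>R\<close> of \<open>\<Prod> |I\<^sub>j|/m\<close>. Since \<open>\<sigma>\<^sub>j\<close> is a bijection onto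
  \<open>Q\<^sub>j\<close>, \<open>|I\<^sub>j|/m\<close> is the frequency of \<open>Q\<^sub>j\<close> in \<open>X\<^sub>j\<close>, within \<open>\<epsilon>\<^sub>j\<close> of \<open>\<mu>(X\<^sub>j)/\<mu>(\<U>)\<close>; the product of
  these ratios is the relative measure of the box, and a product of numbers in \<open>[0,1]\<close> moves
  by at most the sum of the perturbations of its factors.\<close>

lemma abs_prod_diff_le_sum_abs_diff:
  fixes a b :: "'i \<Rightarrow> 'a::linordered_idom"
  assumes "finite S" "\<And>j. j \<in> S \<Longrightarrow> 0 \<le> a j \<and> a j \<le> 1 \<and> 0 \<le> b j \<and> b j \<le> 1"
  shows "\<bar>(\<Prod>j\<in>S. b j) - (\<Prod>j\<in>S. a j)\<bar> \<le> (\<Sum>j\<in>S. \<bar>b j - a j\<bar>)"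
  using assms
proof (induction S rule: finite_induct)
  case empty
  then show ?case by simp
next
  case (insert x S)
  define A B where "A = (\<Prod>j\<in>S. a j)" and "B = (\<Prod>j\<in>S. b j)"
  have A: "0 \<le> A" "A \<le> 1" and bx: "0 \<le> b x" "b x \<le> 1"
    using insert.prems by (auto simp: A_def intro: prod_nonneg prod_le_1)
  have "\<bar>b x * B - a x * A\<bar> = \<bar>b x * (B - A) + (b x - a x) * A\<bar>"
    by (simp add: algebra_simps)
  also have "\<dots> \<le> \<bar>B - A\<bar> + \<bar>b x - a x\<bar>"
    using A bx by (intro abs_triangle_ineq[THEN order_trans] add_mono)
      (auto simp: abs_mult mult_left_le_one_le mult_left_le)
  also have "\<dots> \<le> (\<Sum>j\<in>S. \<bar>b j - a j\<bar>) + \<bar>b x - a x\<bar>"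
    using insert by (simp add: A_def B_def)
  finally show ?case
    using insert.hyps by (simp add: A_def B_def add.commute)
qed

lemma measure_PiM_PiE:
  assumes "finite_measure M" "finite I" "\<And>i. i \<in> I \<Longrightarrow> X i \<in> sets M"
  shows "measure (PiM I (\<lambda>_. M)) (PiE I X) = (\<Prod>i\<in>I. measure M (X i))"
proof -
  interpret finite_measure M by fact
  interpret product_sigma_finite "\<lambda>_. M" by standard
  have "emeasure (PiM I (\<lambda>_. M)) (PiE I X) = (\<Prod>i\<in>I. emeasure M (X i))"
    using assms by (intro emeasure_PiM) auto
  also have "\<dots> = ennreal (\<Prod>i\<in>I. measure M (X i))"
    by (simp add: emeasure_eq_measure prod_ennreal)
  finally show ?thesis
    by (simp add: measure_def prod_nonneg)
qed

lemma measure_PiM_PiE_ratio: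
  assumes "finite_measure M" "finite I" "\<And>i. i \<in> I \<Longrightarrow> X i \<in> sets M"
  shows "measure (PiM I (\<lambda>_. M)) (PiE I X) / measure (PiM I (\<lambda>_. M)) (space (PiM I (\<lambda>_. M)))
       = (\<Prod>i\<in>I. measure M (X i) / measure M (space M))"
proof -
  have "measure (PiM I (\<lambda>_. M)) (space (PiM I (\<lambda>_. M))) = (\<Prod>i\<in>I. measure M (space M))"
    unfolding space_PiM using assms(1,2) by (rule measure_PiM_PiE) simp
  then show ?thesis
    using assms by (simp add: measure_PiM_PiE prod_dividef)
qed

lemma discrepancy_le_iff:
  "discrepancy P Xs N \<le> ereal e \<longleftrightarrow>
     (\<forall>X\<in>Xs. \<bar>real (count_in P X) / real (size P) - measure N X / measure N (space N)\<bar> \<le> e)"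
  by (simp add: discrepancy_def SUP_le_iff)

lemma count_in_mset_set:
  "finite Q \<Longrightarrow> count_in (mset_set Q) X = card (Q \<inter> X)"
  by (simp add: count_in_def Int_def)

lemma count_in_image_mset_cong:
  assumes "\<And>p. p \<in># P \<Longrightarrow> f p \<in> X \<longleftrightarrow> p \<in> Y"
  shows "count_in (image_mset f P) X = count_in P Y"
  unfolding count_in_def filter_mset_image_mset size_image_mset
  using assms by (intro arg_cong[where f = size] filter_mset_cong) auto

lemma card_preimage_eq_card_Int:
  assumes "inj_on \<sigma> A" "\<sigma> ` A \<subseteq> Q" "finite Q" "card Q = card A"
  shows "card {a\<in>A. \<sigma> a \<in> X} = card (Q \<inter> X)"
proof -
  have "\<sigma> ` A = Q"
    using assms card_image card_subset_eq by metis
  then have "\<sigma> ` {a\<in>A. \<sigma> a \<in> X} = Q \<inter> X"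
    by blast
  moreover have "inj_on \<sigma> {a\<in>A. \<sigma> a \<in> X}"
    using assms(1) by (rule inj_on_subset) auto
  ultimately show ?thesis
    by (metis card_image)
qed

lemma preimage_frequency_le:
  assumes "inj_on \<sigma> A" "\<sigma> ` A \<subseteq> Q" "finite Q" "card Q = card A"
    and "discrepancy (mset_set Q) Xs N \<le> ereal e" "X \<in> Xs"
  shows "\<bar>real (card {a\<in>A. \<sigma> a \<in> X}) / real (card A) - measure N X / measure N (space N)\<bar> \<le> e"
  using assms by (simp add: discrepancy_le_iff count_in_mset_set card_preimage_eq_card_Int)

theorem mainTheorem11:
  fixes M :: "'a measure" and n m :: nat
    and Xs :: "nat \<Rightarrow> 'a set set" and Q :: "nat \<Rightarrow> 'a set"
    and eps :: "nat \<Rightarrow> real" and epsR :: real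
    and \<sigma> :: "nat \<Rightarrow> nat \<Rightarrow> 'a"
    and PR :: "(nat \<Rightarrow> nat) multiset"
  assumes pos: "0 < emeasure M (space M)"
    and fin: "emeasure M (space M) < \<infinity>"
    and Xs_meas: "\<And>i. i \<in> {1..n} \<Longrightarrow> Xs i \<subseteq> sets M"
    and Q_sub: "\<And>i. i \<in> {1..n} \<Longrightarrow> Q i \<subseteq> space M"
    and Q_fin: "\<And>i. i \<in> {1..n} \<Longrightarrow> finite (Q i)"
    and Q_card: "\<And>i. i \<in> {1..n} \<Longrightarrow> card (Q i) = m"
    and Q_disc: "\<And>i. i \<in> {1..n} \<Longrightarrow>
                   discrepancy (mset_set (Q i)) (Xs i) M \<le> ereal (eps i)"
    and \<sigma>_inj: "\<And>i. i \<in> {1..n} \<Longrightarrow> inj_on (\<sigma> i) {1..m}"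
    and \<sigma>_into: "\<And>i. i \<in> {1..n} \<Longrightarrow> \<sigma> i ` {1..m} \<subseteq> Q i"
    and PR_ne: "PR \<noteq> {#}"
    and PR_pts: "\<And>p. p \<in># PR \<Longrightarrow> p \<in> PiE {1..n} (\<lambda>_. {1..m})"
    and PR_disc: "\<And>I. (\<forall>j\<in>{1..n}. I j \<subseteq> {1..m}) \<Longrightarrow>
        \<bar>real (count_in PR (PiE {1..n} I)) / real (size PR)
          - (\<Prod>j\<in>{1..n}. real (card (I j)) / real m)\<bar> \<le> epsR"
  shows "discrepancy
           (image_mset (\<lambda>p. restrict (\<lambda>j. \<sigma> j (p j)) {1..n}) PR)
           {PiE {1..n} X | X. \<forall>i\<in>{1..n}. X i \<in> Xs i}
           (PiM {1..n} (\<lambda>_. M))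
         \<le> ereal (epsR + (\<Sum>i\<in>{1..n}. eps i))"
proof -
  interpret finite_measure M
    using fin by (intro finite_measureI) auto
  define f where "f p = restrict (\<lambda>j. \<sigma> j (p j)) {1..n}" for p :: "nat \<Rightarrow> nat"
  let ?\<mu> = "measure (PiM {1..n} (\<lambda>_. M))"
  have "\<bar>real (count_in (image_mset f PR) (PiE {1..n} X)) / real (size (image_mset f PR))
          - ?\<mu> (PiE {1..n} X) / ?\<mu> (space (PiM {1..n} (\<lambda>_. M)))\<bar> \<le> epsR + (\<Sum>j\<in>{1..n}. eps j)"
    if X: "\<forall>i\<in>{1..n}. X i \<in> Xs i" for X
  proof -
    define I where "I j = {a\<in>{1..m}. \<sigma> j a \<in> X j}" for j
    define a b where "a j = measure M (X j) / measure M (space M)"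
      and "b j = real (card (I j)) / real m" for j
    have freq: "count_in (image_mset f PR) (PiE {1..n} X) = count_in PR (PiE {1..n} I)"
      by (rule count_in_image_mset_cong)
        (auto dest!: PR_pts simp: f_def I_def PiE_def Pi_def extensional_def)
    have ratio: "?\<mu> (PiE {1..n} X) / ?\<mu> (space (PiM {1..n} (\<lambda>_. M))) = (\<Prod>j\<in>{1..n}. a j)"
      unfolding a_def using X Xs_meas
      by (intro measure_PiM_PiE_ratio finite_measure_axioms) blast+
    have coordinate: "\<bar>b j - a j\<bar> \<le> eps j" if j: "j \<in> {1..n}" for j
    proof -
      have "card (Q j) = card {1..m}"
        using Q_card[OF j] by simp
      then show ?thesis
        using preimage_frequency_le[OF \<sigma>_inj[OF j] \<sigma>_into[OF j] Q_fin[OF j] _ Q_disc[OF j]] X j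
        by (simp add: a_def b_def I_def)
    qed
    have unit: "0 \<le> a j \<and> a j \<le> 1 \<and> 0 \<le> b j \<and> b j \<le> 1" for j
    proof -
      have "card (I j) \<le> card {1..m}"
        by (rule card_mono) (auto simp: I_def)
      then show ?thesis
        using pos bounded_measure[of "X j"]
        by (auto simp: a_def b_def emeasure_eq_measure divide_le_eq_1)
    qed
    have "\<bar>(\<Prod>j\<in>{1..n}. b j) - (\<Prod>j\<in>{1..n}. a j)\<bar> \<le> (\<Sum>j\<in>{1..n}. \<bar>b j - a j\<bar>)"
      using unit by (intro abs_prod_diff_le_sum_abs_diff) auto
    also have "\<dots> \<le> (\<Sum>j\<in>{1..n}. eps j)"
      using coordinate by (rule sum_mono)
    finally have "\<bar>(\<Prod>j\<in>{1..n}. b j) - (\<Prod>j\<in>{1..n}. a j)\<bar> \<le> (\<Sum>j\<in>{1..n}. eps j)" .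
    moreover have "\<bar>real (count_in PR (PiE {1..n} I)) / real (size PR) - (\<Prod>j\<in>{1..n}. b j)\<bar> \<le> epsR"
      unfolding b_def by (rule PR_disc) (auto simp: I_def)
    ultimately show ?thesis
      unfolding freq ratio size_image_mset by linarith
  qed
  then show ?thesis
    unfolding f_def[abs_def] discrepancy_le_iff by blast
qed

end
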